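(* Let $R$ be a radically finite ring and let $P$ be a prime ideal of $R$. If $P$ has finite height, then $P$ is finitely generated.
   Context: All rings are commutative with identity. An ideal $I$ of $R$ is called radically perfect if $\mathrm{ht}(I)=\inf\{n \mid \sqrt{I}=\sqrt{(\theta_1,\dots,\theta_n)} \text{ for some } \theta_1,\dots,\theta_n\in R\}$, and moreover, if $\mathrm{ht}(I)=0$, then $\sqrt{I}=\sqrt{(\theta)}$ for some zero divisor $\theta$ of $R$. A ring $R$ is called radically finite if every prime ideal $P$ of $R$ is radically perfect and, in addition, the set of ideals of $R$ that are generated by $\mathrm{ht}(P)$ elements and have radical $P$ has a maximal member $A$ such that there are only finitely many ideals in any chain of ideals between $A$ and $P$. *)

theory Defs
  imports "HOL-Algebra.Ideal" "HOL-Library.Extended_Nat"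
begin

definition rad :: "('a, 'b) ring_scheme \<Rightarrow> 'a set \<Rightarrow> 'a set" where
  "rad R I = {x \<in> carrier R. \<exists>n::nat. x [^]\<^bsub>R\<^esub> n \<in> I}"

definition prime_height :: "('a, 'b) ring_scheme \<Rightarrow> 'a set \<Rightarrow> enat" where
  "prime_height R Q = Sup {enat n | n. \<exists>c :: nat \<Rightarrow> 'a set.
      (\<forall>i\<le>n. primeideal (c i) R) \<and> (\<forall>i<n. c i \<subset> c (Suc i)) \<and> c n = Q}"

definition ideal_height :: "('a, 'b) ring_scheme \<Rightarrow> 'a set \<Rightarrow> enat" where
  "ideal_height R I = Inf {prime_height R Q | Q. primeideal Q R \<and> I \<subseteq> Q}"

definition zero_divisor :: "('a, 'b) ring_scheme \<Rightarrow> 'a \<Rightarrow> bool" where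
  "zero_divisor R t \<longleftrightarrow> t \<in> carrier R \<and>
     (\<exists>x\<in>carrier R. x \<noteq> \<zero>\<^bsub>R\<^esub> \<and> t \<otimes>\<^bsub>R\<^esub> x = \<zero>\<^bsub>R\<^esub>)"

definition radically_perfect :: "('a, 'b) ring_scheme \<Rightarrow> 'a set \<Rightarrow> bool" where
  "radically_perfect R I \<longleftrightarrow>
     ideal_height R I = Inf {enat n | n. \<exists>\<theta> :: nat \<Rightarrow> 'a.
          (\<forall>i<n. \<theta> i \<in> carrier R) \<and> rad R I = rad R (Idl\<^bsub>R\<^esub> (\<theta> ` {..<n}))} \<and>
     (ideal_height R I = 0 \<longrightarrow>
        (\<exists>\<theta>. zero_divisor R \<theta> \<and> rad R I = rad R (Idl\<^bsub>R\<^esub> {\<theta>})))"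

(* A is generated by ht(P) elements (theta_i, i < ht(P); countably many if ht(P) = \<infinity>) *)
definition generated_by_n :: "('a, 'b) ring_scheme \<Rightarrow> enat \<Rightarrow> 'a set \<Rightarrow> bool" where
  "generated_by_n R n A \<longleftrightarrow> (\<exists>\<theta> :: nat \<Rightarrow> 'a.
      (\<forall>i. enat i < n \<longrightarrow> \<theta> i \<in> carrier R) \<and> A = Idl\<^bsub>R\<^esub> (\<theta> ` {i. enat i < n}))"

definition radically_finite :: "('a, 'b) ring_scheme \<Rightarrow> bool" where
  "radically_finite R \<longleftrightarrow> (\<forall>P. primeideal P R \<longrightarrow>
     radically_perfect R P \<and>
     (let S = {A. ideal A R \<and> generated_by_n R (prime_height R P) A \<and> rad R A = P} in
      \<exists>A\<in>S. (\<forall>B\<in>S. A \<subseteq> B \<longrightarrow> B = A) \<and>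
        (\<forall>C. (\<forall>J\<in>C. ideal J R \<and> A \<subseteq> J \<and> J \<subseteq> P) \<and>
             (\<forall>J\<in>C. \<forall>K\<in>C. J \<subseteq> K \<or> K \<subseteq> J) \<longrightarrow> finite C)))"

end

theory Submission
  imports Defs
begin

text \<open>The ideal \<open>A\<close> supplied by radical finiteness is generated by \<open>ht(P)\<close> elements, hence
  finitely many when the height is finite, and lies in \<open>P = rad A\<close>. If \<open>P\<close> were not finitely
  generated, adjoining elements of \<open>P\<close> one at a time to these generators would produce an
  infinite strictly ascending chain of ideals between \<open>A\<close> and \<open>P\<close>, which radical finiteness
  forbids.\<close>

lemma (in ring) ideal_subset_rad:
  assumes "ideal A R"
  shows "A \<subseteq> rad R A"
  using ideal.Icarr[OF assms] unfolding rad_def by (auto intro: exI[of _ 1])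

lemma chain_subset_range_mono:
  fixes f :: "'b::linorder \<Rightarrow> 'a set"
  assumes "mono f"
  shows "chain\<^sub>\<subseteq> (range f)"
  using assms unfolding chain_subset_def mono_def by (metis image_iff le_cases)

lemma (in ring) strict_chain_if_not_finitely_generated:
  assumes P: "ideal P R" and "finite S\<^sub>0" "S\<^sub>0 \<subseteq> P"
    and not_fg: "\<nexists>S. finite S \<and> S \<subseteq> carrier R \<and> P = Idl S"
  obtains T :: "nat \<Rightarrow> 'a set"
  where "strict_mono (\<lambda>k. Idl (T k))" and "\<And>k. finite (T k) \<and> S\<^sub>0 \<subseteq> T k \<and> T k \<subseteq> P"
proof -
  have P_carrier: "P \<subseteq> carrier R"
    using ideal.Icarr[OF P] by blast
  have extend: "\<exists>T'. (finite T' \<and> S\<^sub>0 \<subseteq> T' \<and> T' \<subseteq> P) \<and> Idl T \<subset> Idl T'"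
    if T: "finite T \<and> S\<^sub>0 \<subseteq> T \<and> T \<subseteq> P" for T
  proof -
    have T_carrier: "T \<subseteq> carrier R"
      using T P_carrier by blast
    have "Idl T \<subseteq> P"
      using T by (intro genideal_minimal[OF P]) auto
    moreover have "Idl T \<noteq> P"
      using not_fg T T_carrier by blast
    ultimately obtain x where x: "x \<in> P" "x \<notin> Idl T"
      by blast
    have insert_carrier: "insert x T \<subseteq> carrier R"
      using x T_carrier P_carrier by blast
    have "x \<in> Idl (insert x T)"
      using genideal_self[OF insert_carrier] by blast
    moreover have "Idl T \<subseteq> Idl (insert x T)"
      using insert_carrier by (rule subset_Idl_subset) blast
    ultimately have "Idl T \<subset> Idl (insert x T)"
      using x(2) by blast
    then show ?thesis
      using x T by (intro exI[of _ "insert x T"]) auto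
  qed
  have "\<exists>T. \<forall>k. (finite (T k) \<and> S\<^sub>0 \<subseteq> T k \<and> T k \<subseteq> P) \<and> Idl (T k) \<subset> Idl (T (Suc k))"
  proof (rule dependent_nat_choice[where P = "\<lambda>_ T. finite T \<and> S\<^sub>0 \<subseteq> T \<and> T \<subseteq> P"
        and Q = "\<lambda>_ T T'. Idl T \<subset> Idl T'"])
    show "\<exists>T. finite T \<and> S\<^sub>0 \<subseteq> T \<and> T \<subseteq> P"
      using assms(2,3) by blast
  qed (rule extend)
  then obtain T where T_step:
    "\<forall>k. (finite (T k) \<and> S\<^sub>0 \<subseteq> T k \<and> T k \<subseteq> P) \<and> Idl (T k) \<subset> Idl (T (Suc k))" ..
  show ?thesis
  proof (rule that)
    show "strict_mono (\<lambda>k. Idl (T k))"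
      unfolding strict_mono_Suc_iff using T_step by simp
  qed (use T_step in simp)
qed

lemma (in ring) finitely_generated_if_chains_finite:
  assumes P: "ideal P R" and "finite S\<^sub>0" "S\<^sub>0 \<subseteq> P"
    and chains_finite:
      "\<And>C. \<forall>J\<in>C. ideal J R \<and> Idl S\<^sub>0 \<subseteq> J \<and> J \<subseteq> P \<Longrightarrow> chain\<^sub>\<subseteq> C \<Longrightarrow> finite C"
  shows "\<exists>S. finite S \<and> S \<subseteq> carrier R \<and> P = Idl S"
proof (rule ccontr)
  assume "\<nexists>S. finite S \<and> S \<subseteq> carrier R \<and> P = Idl S"
  then obtain T :: "nat \<Rightarrow> 'a set" where strict: "strict_mono (\<lambda>k. Idl (T k))"
    and T: "\<And>k. finite (T k) \<and> S\<^sub>0 \<subseteq> T k \<and> T k \<subseteq> P"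
    using strict_chain_if_not_finitely_generated[OF assms(1-3)] by blast
  have T_carrier: "T k \<subseteq> carrier R" for k
    using T ideal.Icarr[OF P] by blast
  have "finite (range (\<lambda>k. Idl (T k)))"
  proof (rule chains_finite)
    show "\<forall>J\<in>range (\<lambda>k. Idl (T k)). ideal J R \<and> Idl S\<^sub>0 \<subseteq> J \<and> J \<subseteq> P"
    proof
      fix J assume "J \<in> range (\<lambda>k. Idl (T k))"
      then obtain k where J: "J = Idl (T k)"
        by blast
      have "ideal J R"
        unfolding J using T_carrier by (rule genideal_ideal)
      moreover have "Idl S\<^sub>0 \<subseteq> J"
        unfolding J using T_carrier T by (intro subset_Idl_subset) auto
      moreover have "J \<subseteq> P"
        unfolding J using T by (intro genideal_minimal[OF P]) auto
      ultimately show "ideal J R \<and> Idl S\<^sub>0 \<subseteq> J \<and> J \<subseteq> P"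
        by blast
    qed
    show "chain\<^sub>\<subseteq> (range (\<lambda>k. Idl (T k)))"
      using strict by (intro chain_subset_range_mono strict_mono_mono)
  qed
  moreover have "infinite (range (\<lambda>k. Idl (T k)))"
    using strict strict_mono_imp_inj_on range_inj_infinite by blast
  ultimately show False
    by contradiction
qed

lemma radically_finite_finitely_generated_below_prime:
  fixes R (structure)
  assumes "ring R" and "radically_finite R" and "primeideal P R"
    and "prime_height R P \<noteq> \<infinity>"
  obtains S\<^sub>0 where "finite S\<^sub>0" and "S\<^sub>0 \<subseteq> P"
    and "\<And>C. \<forall>J\<in>C. ideal J R \<and> Idl S\<^sub>0 \<subseteq> J \<and> J \<subseteq> P \<Longrightarrow> chain\<^sub>\<subseteq> C \<Longrightarrow> finite C"
proof -
  interpret ring R by (rule assms(1))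
  let ?\<A> = "{A. ideal A R \<and> generated_by_n R (prime_height R P) A \<and> rad R A = P}"
  have "\<exists>A\<in>?\<A>. (\<forall>B\<in>?\<A>. A \<subseteq> B \<longrightarrow> B = A) \<and>
      (\<forall>C. (\<forall>J\<in>C. ideal J R \<and> A \<subseteq> J \<and> J \<subseteq> P) \<and> chain\<^sub>\<subseteq> C \<longrightarrow> finite C)"
    using assms(2)[unfolded radically_finite_def, rule_format, OF assms(3)]
    unfolding Let_def chain_subset_def by (rule conjunct2)
  then obtain A where A: "A \<in> ?\<A>"
    and chains_finite: "\<forall>C. (\<forall>J\<in>C. ideal J R \<and> A \<subseteq> J \<and> J \<subseteq> P) \<and> chain\<^sub>\<subseteq> C \<longrightarrow> finite C"
    by (elim bexE conjE)
  obtain m where m: "prime_height R P = enat m"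
    using assms(4) by (cases "prime_height R P") auto
  from A have A_ideal: "ideal A R" and A_gen: "generated_by_n R (enat m) A"
    and A_rad: "rad R A = P"
    by (simp_all add: m)
  obtain \<theta> where \<theta>: "\<forall>i. enat i < enat m \<longrightarrow> \<theta> i \<in> carrier R"
    and A_eq: "A = Idl (\<theta> ` {i. enat i < enat m})"
    using A_gen unfolding generated_by_n_def by blast
  define S\<^sub>0 where "S\<^sub>0 = \<theta> ` {..<m}"
  have A_generated: "A = Idl S\<^sub>0"
    using A_eq by (simp add: S\<^sub>0_def lessThan_def)
  have "S\<^sub>0 \<subseteq> carrier R"
    using \<theta> by (auto simp: S\<^sub>0_def)
  then have "S\<^sub>0 \<subseteq> A"
    unfolding A_generated by (rule genideal_self)
  also have "A \<subseteq> P"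
    using ideal_subset_rad[OF A_ideal] A_rad by simp
  finally have "S\<^sub>0 \<subseteq> P" .
  show ?thesis
  proof (rule that)
    show "finite S\<^sub>0"
      by (simp add: S\<^sub>0_def)
    show "finite C" if "\<forall>J\<in>C. ideal J R \<and> Idl S\<^sub>0 \<subseteq> J \<and> J \<subseteq> P" and "chain\<^sub>\<subseteq> C" for C
      using chains_finite that unfolding A_generated by blast
  qed fact
qed

theorem theorem2p1:
  fixes R (structure) and P :: "'a set"
  assumes "cring R"
    and "radically_finite R"
    and "primeideal P R"
    and "prime_height R P \<noteq> \<infinity>"
  shows "\<exists>S. finite S \<and> S \<subseteq> carrier R \<and> P = Idl S"
proof -
  interpret cring R by (rule assms(1))
  show ?thesis
  proof (rule radically_finite_finitely_generated_below_prime[OF ring_axioms assms(2-4)])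
    fix S\<^sub>0
    assume "finite S\<^sub>0" and "S\<^sub>0 \<subseteq> P"
      and "\<And>C. \<forall>J\<in>C. ideal J R \<and> Idl S\<^sub>0 \<subseteq> J \<and> J \<subseteq> P \<Longrightarrow> chain\<^sub>\<subseteq> C \<Longrightarrow> finite C"
    then show ?thesis
      by (rule finitely_generated_if_chains_finite[OF primeideal.axioms(1)[OF assms(3)]])
  qed
qed

end
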